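(* Let $B>0$ and let $\phi\in L^2(\mathbb{R})$ be such that $\mathcal{A}\phi(x,0)\neq0$ for almost every $x\in(-2B,2B)$. Then for all even, real-valued $f,g\in L^2(\mathbb{R})$ that vanish almost everywhere outside $[-B,B]$, the following are equivalent: (1) $f=\pm g$; (2) $|\mathcal{V}_\phi f(x,\omega)|=|\mathcal{V}_\phi g(x,\omega)|$ for all $x,\omega\in\mathbb{R}$.
   Context: For $f,\phi\in L^2(\mathbb{R})$ the short-time Fourier transform is $\mathcal{V}_\phi f(x,\omega)=\int_{\mathbb{R}} f(t)\overline{\phi(t-x)}e^{-2\pi i t\omega}\,dt$, and the ambiguity function of $f\in L^2(\mathbb{R})$ is $\mathcal{A}f(x,\omega):=e^{\pi i x\omega}\mathcal{V}_f f(x,\omega)$, for $x,\omega\in\mathbb{R}$. *)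

theory Defs
  imports "HOL-Analysis.Analysis"
begin

definition L2 :: "(real \<Rightarrow> complex) set" where
  "L2 = {f. f \<in> borel_measurable lborel \<and> integrable lborel (\<lambda>t. (norm (f t))\<^sup>2)}"

definition STFT :: "(real \<Rightarrow> complex) \<Rightarrow> (real \<Rightarrow> complex) \<Rightarrow> real \<Rightarrow> real \<Rightarrow> complex" where
  "STFT \<phi> f x \<omega> =
     (LINT t|lborel. f t * cnj (\<phi> (t - x)) * exp (- 2 * pi * \<i> * complex_of_real (t * \<omega>)))"

definition ambiguity :: "(real \<Rightarrow> complex) \<Rightarrow> real \<Rightarrow> real \<Rightarrow> complex" where
  "ambiguity f x \<omega> = exp (pi * \<i> * complex_of_real (x * \<omega>)) * STFT f f x \<omega>"

end

theory Submission
  imports Defs "HOL-Probability.Levy" "HOL-Computational_Algebra.Formal_Power_Series"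
begin

text \<open>Taking the Fourier transform in \<open>\<omega>\<close>, equality of \<open>|V\<^sub>\<phi> f(x,\<cdot>)|\<close> and \<open>|V\<^sub>\<phi> g(x,\<cdot>)|\<close>
  says that \<open>f \<cdot> cnj \<phi>(\<cdot> - x)\<close> and \<open>g \<cdot> cnj \<phi>(\<cdot> - x)\<close> have the same autocorrelation. Integrating
  over \<open>x\<close> turns this into \<open>R\<^sub>f(y) cnj(A\<phi>(y,0)) = R\<^sub>g(y) cnj(A\<phi>(y,0))\<close> for the autocorrelations
  \<open>R\<^sub>f, R\<^sub>g\<close>; these vanish outside \<open>[-2B,2B]\<close> and \<open>A\<phi>(\<cdot>,0)\<close> is a.e. nonzero inside, so
  \<open>R\<^sub>f = R\<^sub>g\<close> a.e. For even real \<open>f\<close>, indeed whenever \<open>f(-t) = cnj f(t)\<close>, the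
  autocorrelation is the convolution \<open>f * f\<close>, so the exponential generating functions of the
  moments satisfy \<open>M\<^sub>f\<^sup>2 = M\<^sub>g\<^sup>2\<close> in the integral domain of formal power series, whence \<open>M\<^sub>f = \<plusminus>M\<^sub>g\<close>. Finally a compactly supported function is
  determined by its moments: they are the Taylor coefficients of its Fourier transform, and
  Fourier transforms determine integrable functions by Levy's uniqueness theorem.\<close>

section \<open>Uniqueness of the Fourier transform\<close>

text \<open>The sign convention is that of the characteristic function \<open>char\<close>, so that Levy's
  uniqueness theorem applies directly; the STFT is this transform evaluated at \<open>-2\<pi>\<omega>\<close>.\<close>

definition fourier :: "(real \<Rightarrow> complex) \<Rightarrow> real \<Rightarrow> complex" where
  "fourier u \<theta> = (CLINT t|lborel. u t * iexp (\<theta> * t))"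

lemma cnj_measurable [measurable]: "(cnj :: complex \<Rightarrow> complex) \<in> borel_measurable borel"
  by (intro borel_measurable_continuous_onI continuous_intros)

lemma iexp_diff: "iexp (a - b) = iexp a * cnj (iexp b)"
proof -
  have cis_eq: "iexp x = cis x" for x
    by (simp add: cis_conv_exp)
  show ?thesis
    unfolding cis_eq by (simp add: cis_cnj cis_mult)
qed

lemma integrable_mult_iexp:
  fixes u :: "real \<Rightarrow> complex"
  assumes "integrable lborel u"
  shows "integrable lborel (\<lambda>t. u t * iexp (\<theta> * t))"
  by (rule Bochner_Integration.integrable_bound[OF assms])
    (use assms in \<open>auto simp: norm_mult\<close>)

lemma fourier_add:
  "integrable lborel u \<Longrightarrow> integrable lborel v \<Longrightarrow>
    fourier (\<lambda>t. u t + v t) \<theta> = fourier u \<theta> + fourier v \<theta>"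
  unfolding fourier_def distrib_right by (intro Bochner_Integration.integral_add integrable_mult_iexp)

lemma fourier_diff:
  "integrable lborel u \<Longrightarrow> integrable lborel v \<Longrightarrow>
    fourier (\<lambda>t. u t - v t) \<theta> = fourier u \<theta> - fourier v \<theta>"
  unfolding fourier_def left_diff_distrib by (intro Bochner_Integration.integral_diff integrable_mult_iexp)

lemma fourier_cnj: "fourier (\<lambda>t. cnj (u t)) \<theta> = cnj (fourier u (- \<theta>))"
proof -
  have pointwise: "cnj (u t) * iexp (\<theta> * t) = cnj (u t * iexp (- \<theta> * t))" for t
    by (simp add: exp_cnj)
  show ?thesis
    unfolding fourier_def Bochner_Integration.integral_cnj[symmetric] by (simp only: pointwise)
qed

lemma fourier_of_real_0: "fourier (\<lambda>t. complex_of_real (v t)) 0 = complex_of_real (integral\<^sup>L lborel v)"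
  unfolding fourier_def by simp

lemma density_real_distribution:
  fixes v :: "real \<Rightarrow> real"
  assumes v: "integrable lborel v" "\<And>t. 0 \<le> v t" and one: "integral\<^sup>L lborel v = 1"
  shows "real_distribution (density lborel v)"
proof -
  have [measurable]: "v \<in> borel_measurable borel" using v by auto
  have "emeasure (density lborel v) UNIV = (\<integral>\<^sup>+ t. ennreal (v t) \<partial>lborel)"
    by (subst emeasure_density) auto
  also have "\<dots> = 1"
    using v one by (subst nn_integral_eq_integral) auto
  finally have "prob_space (density lborel v)"
    by (intro prob_spaceI) simp
  then show ?thesis
    by (simp add: real_distribution_def real_distribution_axioms_def)
qed

lemma char_density:
  fixes v :: "real \<Rightarrow> real"
  assumes [measurable]: "v \<in> borel_measurable borel" and "\<And>t. 0 \<le> v t"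
  shows "char (density lborel v) \<theta> = fourier (\<lambda>t. complex_of_real (v t)) \<theta>"
  unfolding char_def fourier_def using assms
  by (subst integral_density) (auto simp: scaleR_conv_of_real)

lemma fourier_unique_nonneg:
  fixes v w :: "real \<Rightarrow> real"
  assumes v: "integrable lborel v" "\<And>t. 0 \<le> v t"
    and w: "integrable lborel w" "\<And>t. 0 \<le> w t"
    and eq: "\<And>\<theta>. fourier (\<lambda>t. complex_of_real (v t)) \<theta> = fourier (\<lambda>t. complex_of_real (w t)) \<theta>"
  shows "AE t in lborel. v t = w t"
proof -
  have [measurable]: "v \<in> borel_measurable borel" "w \<in> borel_measurable borel"
    using v w by auto
  define c where "c = integral\<^sup>L lborel v"
  have c_w: "c = integral\<^sup>L lborel w"
    using eq[of 0] unfolding c_def fourier_of_real_0 by simp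
  have "c \<ge> 0" unfolding c_def using v by simp
  show ?thesis
  proof (cases "c = 0")
    case True
    have "AE t in lborel. v t = 0"
      using True v unfolding c_def by (simp add: integral_nonneg_eq_0_iff_AE)
    moreover have "AE t in lborel. w t = 0"
      using True w unfolding c_w by (simp add: integral_nonneg_eq_0_iff_AE)
    ultimately show ?thesis by eventually_elim simp
  next
    case False
    with \<open>c \<ge> 0\<close> have "c > 0" by simp
    let ?v = "\<lambda>t. v t / c" and ?w = "\<lambda>t. w t / c"
    have "density lborel ?v = density lborel ?w"
    proof (rule Levy_uniqueness)
      show "real_distribution (density lborel ?v)" "real_distribution (density lborel ?w)"
        using v w \<open>c > 0\<close> c_w unfolding c_def
        by (auto intro!: density_real_distribution)
      have "fourier (\<lambda>t. complex_of_real (?v t)) \<theta> = fourier (\<lambda>t. complex_of_real (?w t)) \<theta>" for \<theta>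
        using eq[of \<theta>] unfolding fourier_def by simp
      then show "char (density lborel ?v) = char (density lborel ?w)"
        using v w \<open>c > 0\<close> by (auto simp: char_density)
    qed
    then have "AE t in lborel. ennreal (?v t) = ennreal (?w t)"
      by (rule sigma_finite_measure.density_unique[OF sigma_finite_lborel, rotated 2]) auto
    then show ?thesis
      by eventually_elim (use v(2) w(2) \<open>c > 0\<close> in simp)
  qed
qed

lemma fourier_unique_real:
  fixes v :: "real \<Rightarrow> real"
  assumes v: "integrable lborel v" and zero: "\<And>\<theta>. fourier (\<lambda>t. complex_of_real (v t)) \<theta> = 0"
  shows "AE t in lborel. v t = 0"
proof -
  define vp where "vp t = max (v t) 0" for t
  define vn where "vn t = max (- v t) 0" for t
  have int: "integrable lborel vp" "integrable lborel vn"
    unfolding vp_def vn_def using v by auto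
  have v_eq: "v t = vp t - vn t" for t
    unfolding vp_def vn_def by auto
  have "fourier (\<lambda>t. complex_of_real (vp t)) \<theta> - fourier (\<lambda>t. complex_of_real (vn t)) \<theta> = 0" for \<theta>
    using zero[of \<theta>] int by (simp add: v_eq fourier_diff[symmetric])
  then have "AE t in lborel. vp t = vn t"
    by (intro fourier_unique_nonneg[OF int(1) _ int(2)]) (auto simp: vp_def vn_def)
  then show ?thesis by eventually_elim (simp add: v_eq)
qed

lemma fourier_unique:
  fixes u :: "real \<Rightarrow> complex"
  assumes u: "integrable lborel u" and zero: "\<And>\<theta>. fourier u \<theta> = 0"
  shows "AE t in lborel. u t = 0"
proof -
  have cnj_zero: "fourier (\<lambda>t. cnj (u t)) \<theta> = 0" for \<theta>
    by (simp add: fourier_cnj zero)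
  have cnj_int: "integrable lborel (\<lambda>t. cnj (u t))"
    using u by simp
  have Re_eq: "(\<lambda>t. complex_of_real (Re (u t))) = (\<lambda>t. (u t + cnj (u t)) / 2)"
    and Im_eq: "(\<lambda>t. complex_of_real (Im (u t))) = (\<lambda>t. (u t - cnj (u t)) / (2 * \<i>))"
    by (auto simp: complex_eq_iff)
  have fourier_divide: "fourier (\<lambda>t. w t / c) \<theta> = fourier w \<theta> / c" for w c \<theta>
    unfolding fourier_def by simp
  have "fourier (\<lambda>t. complex_of_real (Re (u t))) \<theta> = 0"
    and "fourier (\<lambda>t. complex_of_real (Im (u t))) \<theta> = 0" for \<theta>
    unfolding Re_eq Im_eq fourier_divide fourier_add[OF u cnj_int] fourier_diff[OF u cnj_int]
    by (simp_all add: zero cnj_zero)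
  then have "AE t in lborel. Re (u t) = 0" "AE t in lborel. Im (u t) = 0"
    using u by (simp_all add: fourier_unique_real)
  then show ?thesis by eventually_elim (simp add: complex_eq_iff)
qed

section \<open>Square-integrable functions and translations\<close>

lemma L2_borel_measurable: "f \<in> L2 \<Longrightarrow> f \<in> borel_measurable borel"
  unfolding L2_def by simp

lemma integrable_mult_L2:
  fixes f g :: "real \<Rightarrow> complex"
  assumes f: "f \<in> L2" and g: "g \<in> L2"
  shows "integrable lborel (\<lambda>t. f t * g t)"
proof (rule Bochner_Integration.integrable_bound)
  show "integrable lborel (\<lambda>t. (norm (f t))\<^sup>2 + (norm (g t))\<^sup>2)"
    using assms unfolding L2_def by auto
  show "(\<lambda>t. f t * g t) \<in> borel_measurable lborel"
    using f g by (simp add: L2_borel_measurable borel_measurable_times)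
  have "norm (f t) * norm (g t) \<le> (norm (f t))\<^sup>2 + (norm (g t))\<^sup>2" for t
    using sum_squares_bound[of "norm (f t)" "norm (g t)"]
      mult_nonneg_nonneg[OF norm_ge_zero norm_ge_zero, of "f t" "g t"] by linarith
  then show "AE t in lborel. norm (f t * g t) \<le> norm ((norm (f t))\<^sup>2 + (norm (g t))\<^sup>2)"
    by (simp add: norm_mult)
qed

lemma L2_cnj: "f \<in> L2 \<Longrightarrow> (\<lambda>t. cnj (f t)) \<in> L2"
  unfolding L2_def by (simp add: measurable_compose[OF _ cnj_measurable])

lemma integral_shift:
  fixes g :: "real \<Rightarrow> 'a::{banach,second_countable_topology}"
  shows "(\<integral>y. g (y - t) \<partial>lborel) = (\<integral>s. g s \<partial>lborel)"
  using lborel_integral_real_affine[of 1 g "- t"] by simp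

lemma integrable_shift_iff:
  fixes g :: "real \<Rightarrow> 'a::{banach,second_countable_topology}"
  shows "integrable lborel (\<lambda>y. g (y - t)) \<longleftrightarrow> integrable lborel g"
  using lborel_integrable_real_affine_iff[of 1 g "- t"] by simp

lemma integral_reflect_shift:
  fixes g :: "real \<Rightarrow> 'a::{banach,second_countable_topology}"
  shows "(\<integral>y. g (t - y) \<partial>lborel) = (\<integral>s. g s \<partial>lborel)"
  using lborel_integral_real_affine[of "- 1" g t] by simp

lemma integrable_reflect_shift_iff:
  fixes g :: "real \<Rightarrow> 'a::{banach,second_countable_topology}"
  shows "integrable lborel (\<lambda>y. g (t - y)) \<longleftrightarrow> integrable lborel g"
  using lborel_integrable_real_affine_iff[of "- 1" g t] by simp

lemma L2_shift: "f \<in> L2 \<Longrightarrow> (\<lambda>t. f (t - x)) \<in> L2"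
  unfolding L2_def using integrable_shift_iff[of "\<lambda>t. (norm (f t))\<^sup>2" x] by auto

lemma integrable_if_L2_bounded_support:
  fixes f :: "real \<Rightarrow> complex"
  assumes f: "f \<in> L2" and supp: "\<And>t. B < \<bar>t\<bar> \<Longrightarrow> f t = 0"
  shows "integrable lborel f"
proof -
  have "integrable lborel (\<lambda>t. indicator {-B..B} t :: real)"
    by (rule integrable_real_indicator) (auto simp: emeasure_lborel_Icc_eq)
  moreover have "(\<lambda>t. (norm (indicator {-B..B} t :: complex))\<^sup>2) = (\<lambda>t. indicator {-B..B} t :: real)"
    by (auto split: split_indicator)
  ultimately have "(\<lambda>t. indicator {-B..B} t :: complex) \<in> L2"
    unfolding L2_def by simp
  then have "integrable lborel (\<lambda>t. f t * indicator {-B..B} t)"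
    by (rule integrable_mult_L2[OF f])
  moreover have "f t * indicator {-B..B} t = f t" for t
    using supp[of t] by (auto split: split_indicator)
  ultimately show ?thesis
    by simp
qed

section \<open>Autocorrelation and the short-time Fourier transform\<close>

lemma fourier_reflect_cnj: "fourier (\<lambda>y. cnj (h (t - y))) \<theta> = iexp (\<theta> * t) * cnj (fourier h \<theta>)"
proof -
  have pointwise: "cnj (h s) * iexp (\<theta> * (t - s)) = iexp (\<theta> * t) * cnj (h s * iexp (\<theta> * s))" for s
    by (simp add: right_diff_distrib iexp_diff del: of_real_diff of_real_mult)
  have "fourier (\<lambda>y. cnj (h (t - y))) \<theta> = (\<integral>s. cnj (h s) * iexp (\<theta> * (t - s)) \<partial>lborel)"
    unfolding fourier_def
    using integral_reflect_shift[of "\<lambda>s. cnj (h s) * iexp (\<theta> * (t - s))" t] by simp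
  also have "\<dots> = (\<integral>s. iexp (\<theta> * t) * cnj (h s * iexp (\<theta> * s)) \<partial>lborel)"
    by (simp only: pointwise)
  also have "\<dots> = iexp (\<theta> * t) * cnj (fourier h \<theta>)"
    unfolding fourier_def Bochner_Integration.integral_cnj[symmetric]
    by (rule integral_mult_right_zero)
  finally show ?thesis .
qed

definition autocorr :: "(real \<Rightarrow> complex) \<Rightarrow> real \<Rightarrow> complex" where
  "autocorr h y = (CLINT t|lborel. h t * cnj (h (t - y)))"

lemma
  fixes h :: "real \<Rightarrow> complex"
  assumes h: "integrable lborel h"
  shows integrable_autocorr: "integrable lborel (autocorr h)"
    and fourier_autocorr: "fourier (autocorr h) \<theta> = complex_of_real ((norm (fourier h \<theta>))\<^sup>2)"
proof -
  have [measurable]: "h \<in> borel_measurable borel" using h by auto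
  define F where "F \<theta> t y = h t * cnj (h (t - y)) * iexp (\<theta> * y)" for \<theta> t y
  have F_fiber: "integrable lborel (F \<theta> t)" for \<theta> t
  proof -
    have "integrable lborel (\<lambda>y. cnj (h (t - y)))"
      using h integrable_reflect_shift_iff[of "\<lambda>s. cnj (h s)" t] by simp
    then show ?thesis
      unfolding F_def by (intro integrable_mult_iexp integrable_mult_right)
  qed
  have F_fiber_norm: "(\<integral>y. norm (F \<theta> t y) \<partial>lborel) = norm (h t) * (\<integral>s. norm (h s) \<partial>lborel)" for \<theta> t
    unfolding F_def using integral_reflect_shift[of "\<lambda>s. norm (h s)" t]
    by (simp add: norm_mult)
  have F_int: "integrable (lborel \<Otimes>\<^sub>M lborel) (\<lambda>(t, y). F \<theta> t y)" for \<theta>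
  proof (rule lborel_pair.Fubini_integrable)
    show "(\<lambda>(t, y). F \<theta> t y) \<in> borel_measurable (lborel \<Otimes>\<^sub>M lborel)"
      unfolding F_def by measurable
  qed (use h F_fiber in \<open>simp_all add: F_fiber_norm\<close>)
  have "integrable lborel (\<lambda>y. \<integral>t. F 0 t y \<partial>lborel)"
    by (rule lborel_pair.integrable_snd[OF F_int])
  then show "integrable lborel (autocorr h)"
    unfolding autocorr_def F_def by simp
  have "fourier (autocorr h) \<theta> = (\<integral>y. \<integral>t. F \<theta> t y \<partial>lborel \<partial>lborel)"
    unfolding fourier_def autocorr_def F_def by simp
  also have "\<dots> = (\<integral>t. \<integral>y. F \<theta> t y \<partial>lborel \<partial>lborel)"
    by (rule lborel_pair.Fubini_integral[OF F_int])
  also have "\<dots> = (\<integral>t. h t * fourier (\<lambda>y. cnj (h (t - y))) \<theta> \<partial>lborel)"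
    unfolding F_def fourier_def by (simp add: mult.assoc)
  also have "\<dots> = (\<integral>t. h t * iexp (\<theta> * t) * cnj (fourier h \<theta>) \<partial>lborel)"
    by (simp only: fourier_reflect_cnj mult.assoc)
  also have "\<dots> = fourier h \<theta> * cnj (fourier h \<theta>)"
    unfolding fourier_def by simp
  finally show "fourier (autocorr h) \<theta> = complex_of_real ((norm (fourier h \<theta>))\<^sup>2)"
    unfolding complex_norm_square .
qed

lemma autocorr_AE_eq_if_fourier_norm_eq:
  fixes h k :: "real \<Rightarrow> complex"
  assumes h: "integrable lborel h" and k: "integrable lborel k"
    and eq: "\<And>\<theta>. norm (fourier h \<theta>) = norm (fourier k \<theta>)"
  shows "AE y in lborel. autocorr h y = autocorr k y"
proof -
  have "AE y in lborel. autocorr h y - autocorr k y = 0"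
    using h k eq
    by (intro fourier_unique) (simp_all add: fourier_diff integrable_autocorr fourier_autocorr)
  then show ?thesis by simp
qed

lemma autocorr_eq_0_outside:
  assumes supp: "\<And>t. B < \<bar>t\<bar> \<Longrightarrow> u t = 0" and y: "2 * B < \<bar>y\<bar>"
  shows "autocorr u y = 0"
proof -
  have "(\<lambda>t. u t * cnj (u (t - y))) = (\<lambda>t. 0)"
  proof
    fix t
    show "u t * cnj (u (t - y)) = 0"
      using supp[of t] supp[of "t - y"] y by (cases "B < \<bar>t\<bar>") auto
  qed
  then show ?thesis unfolding autocorr_def by simp
qed

lemma autocorr_measurable [measurable]:
  assumes [measurable]: "u \<in> borel_measurable borel"
  shows "autocorr u \<in> borel_measurable borel"
proof -
  have "(\<lambda>(y, t). u t * cnj (u (t - y))) \<in> borel_measurable (lborel \<Otimes>\<^sub>M lborel)"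
    by measurable
  then have "(\<lambda>y. CLINT t|lborel. u t * cnj (u (t - y))) \<in> borel_measurable lborel"
    by (rule lborel.borel_measurable_lebesgue_integral)
  then show ?thesis
    unfolding autocorr_def[abs_def] by simp
qed

lemma STFT_eq_fourier: "STFT \<phi> f x \<omega> = fourier (\<lambda>t. f t * cnj (\<phi> (t - x))) (- 2 * pi * \<omega>)"
  unfolding STFT_def fourier_def by (simp add: algebra_simps)

lemma STFT_cong_AE:
  assumes [measurable]: "f \<in> borel_measurable borel" "g \<in> borel_measurable borel"
    "\<phi> \<in> borel_measurable borel"
    and eq: "AE t in lborel. f t = g t"
  shows "STFT \<phi> f x \<omega> = STFT \<phi> g x \<omega>"
  unfolding STFT_def by (rule integral_cong_AE) (use eq in auto)

lemma STFT_uminus: "STFT \<phi> (\<lambda>t. - f t) x \<omega> = - STFT \<phi> f x \<omega>"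
  unfolding STFT_def by simp

lemma ambiguity_at_zero_frequency: "ambiguity \<phi> y 0 = autocorr \<phi> y"
  unfolding ambiguity_def STFT_def autocorr_def by simp

lemma integral_autocorr_window:
  fixes f \<phi> :: "real \<Rightarrow> complex"
  assumes f: "f \<in> L2" and \<phi>: "\<phi> \<in> L2"
  shows "(\<integral>x. autocorr (\<lambda>t. f t * cnj (\<phi> (t - x))) y \<partial>lborel) = autocorr f y * cnj (autocorr \<phi> y)"
proof -
  have [measurable]: "f \<in> borel_measurable borel" "\<phi> \<in> borel_measurable borel"
    using f \<phi> by (simp_all add: L2_borel_measurable)
  define G where "G t x = f t * cnj (f (t - y)) * (cnj (\<phi> (t - x)) * \<phi> (t - x - y))" for t x
  have ff: "integrable lborel (\<lambda>t. f t * cnj (f (t - y)))"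
    using f by (intro integrable_mult_L2 L2_cnj L2_shift)
  have \<phi>\<phi>: "integrable lborel (\<lambda>s. cnj (\<phi> s) * \<phi> (s - y))"
    using \<phi> by (intro integrable_mult_L2 L2_cnj L2_shift)
  have G_fiber: "integrable lborel (G t)" for t
    using \<phi>\<phi> integrable_reflect_shift_iff[of "\<lambda>s. cnj (\<phi> s) * \<phi> (s - y)" t]
    unfolding G_def by (intro integrable_mult_right) simp
  have G_fiber_norm: "(\<integral>x. norm (G t x) \<partial>lborel) =
      norm (f t * cnj (f (t - y))) * (\<integral>s. norm (cnj (\<phi> s) * \<phi> (s - y)) \<partial>lborel)" for t
    using integral_reflect_shift[of "\<lambda>s. norm (cnj (\<phi> s) * \<phi> (s - y))" t]
    unfolding G_def by (simp add: norm_mult)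
  have G_int: "integrable (lborel \<Otimes>\<^sub>M lborel) (\<lambda>(t, x). G t x)"
  proof (rule lborel_pair.Fubini_integrable)
    show "(\<lambda>(t, x). G t x) \<in> borel_measurable (lborel \<Otimes>\<^sub>M lborel)"
      unfolding G_def by measurable
  qed (use ff G_fiber in \<open>simp_all add: G_fiber_norm\<close>)
  have inner: "(\<integral>x. G t x \<partial>lborel) = f t * cnj (f (t - y)) * cnj (autocorr \<phi> y)" for t
  proof -
    have "(\<integral>x. cnj (\<phi> (t - x)) * \<phi> (t - x - y) \<partial>lborel) = cnj (autocorr \<phi> y)"
      using integral_reflect_shift[of "\<lambda>s. cnj (\<phi> s) * \<phi> (s - y)" t]
      unfolding autocorr_def Bochner_Integration.integral_cnj[symmetric] by simp
    then show ?thesis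
      unfolding G_def by simp
  qed
  have "(\<integral>x. autocorr (\<lambda>t. f t * cnj (\<phi> (t - x))) y \<partial>lborel) = (\<integral>x. \<integral>t. G t x \<partial>lborel \<partial>lborel)"
    unfolding autocorr_def G_def by (simp add: algebra_simps)
  also have "\<dots> = (\<integral>t. \<integral>x. G t x \<partial>lborel \<partial>lborel)"
    by (rule lborel_pair.Fubini_integral[OF G_int])
  also have "\<dots> = autocorr f y * cnj (autocorr \<phi> y)"
    unfolding inner autocorr_def by simp
  finally show ?thesis .
qed

lemma autocorr_mult_ambiguity_AE_eq:
  fixes \<phi> f g :: "real \<Rightarrow> complex"
  assumes f: "f \<in> L2" and g: "g \<in> L2" and \<phi>: "\<phi> \<in> L2"
    and eq: "\<And>x \<omega>. norm (STFT \<phi> f x \<omega>) = norm (STFT \<phi> g x \<omega>)"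
  shows "AE y in lborel. autocorr f y * cnj (ambiguity \<phi> y 0) = autocorr g y * cnj (ambiguity \<phi> y 0)"
proof -
  have [measurable]: "f \<in> borel_measurable borel" "g \<in> borel_measurable borel" "\<phi> \<in> borel_measurable borel"
    using f g \<phi> by (simp_all add: L2_borel_measurable)
  define Rf where "Rf x y = autocorr (\<lambda>t. f t * cnj (\<phi> (t - x))) y" for x y
  define Rg where "Rg x y = autocorr (\<lambda>t. g t * cnj (\<phi> (t - x))) y" for x y
  have [measurable]: "(\<lambda>p. Rf (fst p) (snd p)) \<in> borel_measurable (lborel \<Otimes>\<^sub>M lborel)"
    "(\<lambda>p. Rg (fst p) (snd p)) \<in> borel_measurable (lborel \<Otimes>\<^sub>M lborel)"
    unfolding Rf_def Rg_def autocorr_def by measurable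
  have "AE y in lborel. Rf x y = Rg x y" for x
  proof -
    have "norm (fourier (\<lambda>t. f t * cnj (\<phi> (t - x))) \<theta>) = norm (fourier (\<lambda>t. g t * cnj (\<phi> (t - x))) \<theta>)" for \<theta>
      using eq[of x "- \<theta> / (2 * pi)"] by (simp add: STFT_eq_fourier)
    then show ?thesis
      unfolding Rf_def Rg_def using f g \<phi>
      by (intro autocorr_AE_eq_if_fourier_norm_eq integrable_mult_L2 L2_cnj L2_shift)
  qed
  then have "AE x in lborel. AE y in lborel. Rf x y = Rg x y"
    by simp
  then have "AE y in lborel. AE x in lborel. Rf x y = Rg x y"
    by (subst (asm) lborel_pair.AE_commute) measurable
  then show ?thesis
  proof eventually_elim
    case (elim y)
    then have "(\<integral>x. Rf x y \<partial>lborel) = (\<integral>x. Rg x y \<partial>lborel)"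
      by (intro integral_cong_AE) (simp_all add: Rf_def Rg_def autocorr_def)
    then show ?case
      unfolding Rf_def Rg_def integral_autocorr_window[OF f \<phi>] integral_autocorr_window[OF g \<phi>]
        ambiguity_at_zero_frequency .
  qed
qed

section \<open>Moments of compactly supported functions\<close>

definition moment :: "(real \<Rightarrow> complex) \<Rightarrow> nat \<Rightarrow> complex" where
  "moment u n = (CLINT t|lborel. u t * complex_of_real (t ^ n))"

definition moment_egf :: "(real \<Rightarrow> complex) \<Rightarrow> complex fps" where
  "moment_egf u = Abs_fps (\<lambda>n. moment u n / fact n)"

lemma norm_mult_power_le_if_bounded_support:
  fixes u :: "real \<Rightarrow> complex"
  assumes supp: "\<And>t. B < \<bar>t\<bar> \<Longrightarrow> u t = 0"
  shows "norm (u t * complex_of_real (t ^ n)) \<le> \<bar>B\<bar> ^ n * norm (u t)"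
proof (cases "B < \<bar>t\<bar>")
  case False
  then have "\<bar>t\<bar> ^ n \<le> \<bar>B\<bar> ^ n" by (intro power_mono) auto
  then show ?thesis by (simp add: norm_mult norm_power power_abs mult.commute mult_left_mono)
qed (simp add: supp)

lemma integrable_mult_power_if_bounded_support:
  fixes u :: "real \<Rightarrow> complex"
  assumes u: "integrable lborel u" and supp: "\<And>t. B < \<bar>t\<bar> \<Longrightarrow> u t = 0"
  shows "integrable lborel (\<lambda>t. u t * complex_of_real (t ^ n))"
proof (rule Bochner_Integration.integrable_bound)
  show "integrable lborel (\<lambda>t. \<bar>B\<bar> ^ n * norm (u t))"
    using u by simp
  show "(\<lambda>t. u t * complex_of_real (t ^ n)) \<in> borel_measurable lborel"
    using u by measurable
  show "AE t in lborel. norm (u t * complex_of_real (t ^ n)) \<le> norm (\<bar>B\<bar> ^ n * norm (u t))"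
    using norm_mult_power_le_if_bounded_support[where u = u and B = B, OF supp] by simp
qed

lemma moment_translate:
  fixes u :: "real \<Rightarrow> complex"
  assumes u: "integrable lborel u" and supp: "\<And>t. B < \<bar>t\<bar> \<Longrightarrow> u t = 0"
  shows "moment (\<lambda>y. u (y - t)) n =
    (\<Sum>k\<le>n. of_nat (n choose k) * complex_of_real (t ^ (n - k)) * moment u k)"
proof -
  have "moment (\<lambda>y. u (y - t)) n = (\<integral>s. u s * complex_of_real ((s + t) ^ n) \<partial>lborel)"
    unfolding moment_def using integral_shift[of "\<lambda>s. u s * complex_of_real ((s + t) ^ n)" t] by simp
  also have "\<dots> = (\<integral>s. (\<Sum>k\<le>n. of_nat (n choose k) * complex_of_real (t ^ (n - k)) *
      (u s * complex_of_real (s ^ k))) \<partial>lborel)"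
    by (simp add: binomial_ring sum_distrib_left mult_ac)
  also have "\<dots> = (\<Sum>k\<le>n. of_nat (n choose k) * complex_of_real (t ^ (n - k)) * moment u k)"
    unfolding moment_def using integrable_mult_power_if_bounded_support[OF u supp]
    by (subst Bochner_Integration.integral_sum) auto
  finally show ?thesis .
qed

lemma integrable_convolution_mult_power:
  fixes u :: "real \<Rightarrow> complex"
  assumes u: "integrable lborel u" and supp: "\<And>t. B < \<bar>t\<bar> \<Longrightarrow> u t = 0"
  shows "integrable (lborel \<Otimes>\<^sub>M lborel) (\<lambda>(t, y). u t * u (y - t) * complex_of_real (y ^ n))"
proof -
  have [measurable]: "u \<in> borel_measurable borel" using u by auto
  define H where "H t y = (2 * \<bar>B\<bar>) ^ n * (norm (u t) * norm (u (y - t)))" for t y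
  have H_fiber: "integrable lborel (H t)" for t
    using u integrable_shift_iff[of "\<lambda>s. norm (u s)" t]
    unfolding H_def by (intro integrable_mult_right) simp
  have H_fiber_norm: "(\<integral>y. \<bar>H t y\<bar> \<partial>lborel) = (2 * \<bar>B\<bar>) ^ n * (norm (u t) * (\<integral>s. norm (u s) \<partial>lborel))" for t
    using integral_shift[of "\<lambda>s. norm (u s)" t] unfolding H_def by simp
  have H_int: "integrable (lborel \<Otimes>\<^sub>M lborel) (\<lambda>(t, y). H t y)"
  proof (rule lborel_pair.Fubini_integrable)
    show "(\<lambda>(t, y). H t y) \<in> borel_measurable (lborel \<Otimes>\<^sub>M lborel)"
      unfolding H_def by measurable
  qed (use u H_fiber in \<open>simp_all add: H_fiber_norm\<close>)
  define F where "F t y = u t * u (y - t) * complex_of_real (y ^ n)" for t y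
  have F_le_H: "norm (F t y) \<le> H t y" for t y
  proof (cases "u t = 0 \<or> u (y - t) = 0")
    case False
    then have "\<bar>t\<bar> \<le> B" "\<bar>y - t\<bar> \<le> B" using supp by (auto simp: not_less[symmetric])
    then have "\<bar>y\<bar> ^ n \<le> (2 * \<bar>B\<bar>) ^ n" by (intro power_mono) auto
    have "norm (F t y) = (norm (u t) * norm (u (y - t))) * \<bar>y\<bar> ^ n"
      by (simp add: F_def norm_mult norm_power power_abs)
    also have "\<dots> \<le> (norm (u t) * norm (u (y - t))) * (2 * \<bar>B\<bar>) ^ n"
      using \<open>\<bar>y\<bar> ^ n \<le> (2 * \<bar>B\<bar>) ^ n\<close> by (rule mult_left_mono) simp
    finally show ?thesis by (simp add: H_def mult.commute)
  qed (auto simp: F_def H_def)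
  have "integrable (lborel \<Otimes>\<^sub>M lborel) (\<lambda>(t, y). F t y)"
  proof (rule Bochner_Integration.integrable_bound[OF H_int])
    show "(\<lambda>(t, y). F t y) \<in> borel_measurable (lborel \<Otimes>\<^sub>M lborel)"
      unfolding F_def by measurable
  qed (auto intro: order_trans[OF F_le_H abs_ge_self])
  then show ?thesis
    unfolding F_def .
qed

lemma moment_autocorr:
  fixes u :: "real \<Rightarrow> complex"
  assumes u: "integrable lborel u" and supp: "\<And>t. B < \<bar>t\<bar> \<Longrightarrow> u t = 0"
    and sym: "\<And>t. u (- t) = cnj (u t)"
  shows "moment (autocorr u) n = (\<Sum>k\<le>n. of_nat (n choose k) * moment u k * moment u (n - k))"
proof -
  have "cnj (u (t - y)) = u (y - t)" for t y
    using sym[of "t - y"] by simp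
  then have "moment (autocorr u) n = (\<integral>y. \<integral>t. u t * u (y - t) * complex_of_real (y ^ n) \<partial>lborel \<partial>lborel)"
    unfolding moment_def autocorr_def by simp
  also have "\<dots> = (\<integral>t. \<integral>y. u t * u (y - t) * complex_of_real (y ^ n) \<partial>lborel \<partial>lborel)"
    using lborel_pair.Fubini_integral[OF integrable_convolution_mult_power[OF u supp]] by simp
  also have "\<dots> = (\<integral>t. u t * moment (\<lambda>y. u (y - t)) n \<partial>lborel)"
    unfolding moment_def by (simp add: mult.assoc)
  also have "\<dots> = (\<integral>t. (\<Sum>k\<le>n. of_nat (n choose k) * moment u k *
      (u t * complex_of_real (t ^ (n - k)))) \<partial>lborel)"
    by (simp add: moment_translate[OF u supp] sum_distrib_left mult_ac)
  also have "\<dots> = (\<Sum>k\<le>n. of_nat (n choose k) * moment u k * moment u (n - k))"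
    unfolding moment_def[of u "_ - _"] using integrable_mult_power_if_bounded_support[OF u supp]
    by (subst Bochner_Integration.integral_sum) auto
  finally show ?thesis .
qed

lemma moment_egf_autocorr:
  fixes u :: "real \<Rightarrow> complex"
  assumes u: "integrable lborel u" and supp: "\<And>t. B < \<bar>t\<bar> \<Longrightarrow> u t = 0"
    and sym: "\<And>t. u (- t) = cnj (u t)"
  shows "moment_egf (autocorr u) = moment_egf u * moment_egf u"
proof (rule fps_ext)
  fix n
  have "fps_nth (moment_egf (autocorr u)) n =
      (\<Sum>k\<le>n. of_nat (n choose k) * moment u k * moment u (n - k)) / fact n"
    unfolding moment_egf_def by (simp add: moment_autocorr[of u B, OF u supp sym])
  also have "\<dots> = (\<Sum>k\<le>n. moment u k / fact k * (moment u (n - k) / fact (n - k)))"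
    unfolding sum_divide_distrib by (intro sum.cong refl) (simp add: binomial_fact)
  also have "\<dots> = fps_nth (moment_egf u * moment_egf u) n"
    unfolding fps_mult_nth moment_egf_def by (simp add: atLeast0AtMost)
  finally show "fps_nth (moment_egf (autocorr u)) n = fps_nth (moment_egf u * moment_egf u) n" .
qed

lemma fourier_sums_moments:
  fixes u :: "real \<Rightarrow> complex"
  assumes u: "integrable lborel u" and supp: "\<And>t. B < \<bar>t\<bar> \<Longrightarrow> u t = 0"
  shows "(\<lambda>n. moment u n * ((\<i> * complex_of_real \<theta>) ^ n / fact n)) sums fourier u \<theta>"
proof -
  define T where "T n t = u t * complex_of_real (t ^ n) * ((\<i> * complex_of_real \<theta>) ^ n / fact n)" for n t
  define c where "c n = (\<bar>B\<bar> * \<bar>\<theta>\<bar>) ^ n / fact n" for n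
  have c_summable: "summable c"
    unfolding c_def using summable_exp[of "\<bar>B\<bar> * \<bar>\<theta>\<bar>"] by (simp add: field_simps)
  have T_sums: "(\<lambda>n. T n t) sums (u t * iexp (\<theta> * t))" for t
  proof -
    have "(\<lambda>n. u t * ((\<i> * complex_of_real (\<theta> * t)) ^ n /\<^sub>R fact n)) sums (u t * iexp (\<theta> * t))"
      by (intro sums_mult exp_converges)
    then show ?thesis
      unfolding T_def by (simp add: scaleR_conv_of_real field_simps)
  qed
  have T_int: "integrable lborel (T n)" for n
    unfolding T_def
    by (intro integrable_mult_left integrable_mult_power_if_bounded_support[OF u supp])
  have T_le: "norm (T n t) \<le> norm (u t) * c n" for n t
  proof -
    have "norm (T n t) = norm (u t * complex_of_real (t ^ n)) * (\<bar>\<theta>\<bar> ^ n / fact n)"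
      unfolding T_def by (simp add: norm_mult norm_power norm_divide)
    also have "\<dots> \<le> \<bar>B\<bar> ^ n * norm (u t) * (\<bar>\<theta>\<bar> ^ n / fact n)"
      by (intro mult_right_mono norm_mult_power_le_if_bounded_support[where u = u and B = B, OF supp])
        simp_all
    finally show ?thesis
      by (simp add: c_def power_mult_distrib mult_ac)
  qed
  have "summable (\<lambda>n. norm (T n t))" for t
    by (rule summable_comparison_test[OF _ summable_mult[OF c_summable, of "norm (u t)"]])
      (simp add: T_le)
  then have "AE t in lborel. summable (\<lambda>n. norm (T n t))"
    by simp
  moreover have "summable (\<lambda>n. \<integral>t. norm (T n t) \<partial>lborel)"
  proof (rule summable_comparison_test[rotated])
    show "summable (\<lambda>n. (\<integral>t. norm (u t) \<partial>lborel) * c n)"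
      by (rule summable_mult[OF c_summable])
    have "(\<integral>t. norm (T n t) \<partial>lborel) \<le> (\<integral>t. norm (u t) * c n \<partial>lborel)" for n
      using u T_int by (intro integral_mono T_le) auto
    then show "\<exists>N. \<forall>n\<ge>N. norm (\<integral>t. norm (T n t) \<partial>lborel) \<le> (\<integral>t. norm (u t) \<partial>lborel) * c n"
      by simp
  qed
  ultimately have "(\<lambda>n. integral\<^sup>L lborel (T n)) sums (\<integral>t. (\<Sum>n. T n t) \<partial>lborel)"
    by (rule sums_integral[OF T_int])
  moreover have "(\<integral>t. (\<Sum>n. T n t) \<partial>lborel) = fourier u \<theta>"
    unfolding fourier_def using sums_unique[OF T_sums, symmetric] by simp
  ultimately show ?thesis
    unfolding T_def moment_def by simp
qed

lemma AE_zero_if_moments_zero: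
  fixes u :: "real \<Rightarrow> complex"
  assumes u: "integrable lborel u" and supp: "\<And>t. B < \<bar>t\<bar> \<Longrightarrow> u t = 0"
    and zero: "\<And>n. moment u n = 0"
  shows "AE t in lborel. u t = 0"
proof (rule fourier_unique[OF u])
  fix \<theta>
  have "(\<lambda>n. 0) sums fourier u \<theta>"
    using fourier_sums_moments[OF u supp, where \<theta> = \<theta>] by (simp add: zero)
  then show "fourier u \<theta> = 0"
    by (rule sums_unique2[OF _ sums_zero])
qed

lemma AE_eq_if_moment_egf_eq:
  fixes u v :: "real \<Rightarrow> complex"
  assumes u: "integrable lborel u" "\<And>t. B < \<bar>t\<bar> \<Longrightarrow> u t = 0"
    and v: "integrable lborel v" "\<And>t. B < \<bar>t\<bar> \<Longrightarrow> v t = 0"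
    and eq: "moment_egf u = moment_egf v"
  shows "AE t in lborel. u t = v t"
proof -
  have "moment u n = moment v n" for n
    using arg_cong[OF eq, of "\<lambda>F. fps_nth F n"] unfolding moment_egf_def by simp
  moreover have "moment (\<lambda>t. u t - v t) n = moment u n - moment v n" for n
    unfolding moment_def left_diff_distrib
    by (rule Bochner_Integration.integral_diff;
        rule integrable_mult_power_if_bounded_support[of _ B]) (use u v in auto)
  ultimately have "moment (\<lambda>t. u t - v t) n = 0" for n
    by simp
  then have "AE t in lborel. u t - v t = 0"
    using u v by (intro AE_zero_if_moments_zero[of _ B]) auto
  then show ?thesis by simp
qed

lemma moment_egf_uminus: "moment_egf (\<lambda>t. - u t) = - moment_egf u"
  unfolding moment_egf_def moment_def by (rule fps_ext) simp

lemma AE_eq_or_neg_if_autocorr_AE_eq: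
  fixes u v :: "real \<Rightarrow> complex"
  assumes u: "integrable lborel u" "\<And>t. B < \<bar>t\<bar> \<Longrightarrow> u t = 0" "\<And>t. u (- t) = cnj (u t)"
    and v: "integrable lborel v" "\<And>t. B < \<bar>t\<bar> \<Longrightarrow> v t = 0" "\<And>t. v (- t) = cnj (v t)"
    and eq: "AE y in lborel. autocorr u y = autocorr v y"
  shows "(AE t in lborel. u t = v t) \<or> (AE t in lborel. u t = - v t)"
proof -
  have [measurable]: "u \<in> borel_measurable borel" "v \<in> borel_measurable borel"
    using u v by auto
  have "moment (autocorr u) n = moment (autocorr v) n" for n
    unfolding moment_def using eq by (intro integral_cong_AE) auto
  then have "moment_egf (autocorr u) = moment_egf (autocorr v)"
    unfolding moment_egf_def by simp
  then have "moment_egf u * moment_egf u = moment_egf v * moment_egf v"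
    using moment_egf_autocorr[of u B, OF u] moment_egf_autocorr[of v B, OF v] by simp
  then have "moment_egf u = moment_egf v \<or> moment_egf u = moment_egf (\<lambda>t. - v t)"
    unfolding moment_egf_uminus by (simp add: square_eq_iff)
  then show ?thesis
    using u v by (auto intro: AE_eq_if_moment_egf_eq[of _ B])
qed

section \<open>Phase retrieval\<close>

lemma autocorr_AE_eq_if_STFT_norm_eq:
  fixes \<phi> f g :: "real \<Rightarrow> complex"
  assumes \<phi>: "\<phi> \<in> L2"
    and amb: "AE y in lborel. y \<in> {-2*B<..<2*B} \<longrightarrow> ambiguity \<phi> y 0 \<noteq> 0"
    and f: "f \<in> L2" "\<And>t. B < \<bar>t\<bar> \<Longrightarrow> f t = 0"
    and g: "g \<in> L2" "\<And>t. B < \<bar>t\<bar> \<Longrightarrow> g t = 0"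
    and eq: "\<And>x \<omega>. norm (STFT \<phi> f x \<omega>) = norm (STFT \<phi> g x \<omega>)"
  shows "AE y in lborel. autocorr f y = autocorr g y"
  using autocorr_mult_ambiguity_AE_eq[OF f(1) g(1) \<phi> eq] amb
    AE_lborel_singleton[of "2 * B"] AE_lborel_singleton[of "- 2 * B"]
proof eventually_elim
  case (elim y)
  show ?case
  proof (cases "2 * B < \<bar>y\<bar>")
    case True
    then show ?thesis
      using autocorr_eq_0_outside[OF f(2)] autocorr_eq_0_outside[OF g(2)] by simp
  next
    case False
    then have "ambiguity \<phi> y 0 \<noteq> 0"
      using elim by auto
    then show ?thesis
      using elim(1) by simp
  qed
qed

lemma conj_symmetric_representative:
  fixes f :: "real \<Rightarrow> complex"
  assumes f: "f \<in> L2"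
    and even: "AE t in lborel. f (- t) = f t"
    and real: "AE t in lborel. f t \<in> \<real>"
    and supp: "AE t in lborel. t \<notin> {-B..B} \<longrightarrow> f t = 0"
  obtains f' where "f' \<in> L2" "\<And>t. f' (- t) = cnj (f' t)" "\<And>t. B < \<bar>t\<bar> \<Longrightarrow> f' t = 0"
    "AE t in lborel. f t = f' t"
proof -
  have [measurable]: "f \<in> borel_measurable borel"
    using f by (rule L2_borel_measurable)
  define f' where "f' t = (if \<bar>t\<bar> \<le> B then (f t + cnj (f (- t))) / 2 else 0)" for t
  have sym: "f' (- t) = cnj (f' t)" for t
    unfolding f'_def by (simp add: add.commute)
  have supp': "B < \<bar>t\<bar> \<Longrightarrow> f' t = 0" for t
    unfolding f'_def by simp
  have ae: "AE t in lborel. f t = f' t"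
    using even real supp
  proof eventually_elim
    case (elim t)
    then show ?case
      unfolding f'_def by (auto simp: Reals_cnj_iff field_simps)
  qed
  have "integrable lborel (\<lambda>t. (norm (f' t))\<^sup>2)"
    using f ae unfolding L2_def f'_def
    by (subst integrable_cong_AE[where g = "\<lambda>t. (norm (f t))\<^sup>2"]) auto
  then have "f' \<in> L2"
    unfolding L2_def f'_def by simp
  from this sym supp' ae show ?thesis
    by (rule that)
qed

lemma STFT_norm_eq_iff_AE_eq_or_neg:
  fixes \<phi> f g :: "real \<Rightarrow> complex"
  assumes \<phi>: "\<phi> \<in> L2"
    and amb: "AE y in lborel. y \<in> {-2*B<..<2*B} \<longrightarrow> ambiguity \<phi> y 0 \<noteq> 0"
    and f: "f \<in> L2" "\<And>t. f (- t) = cnj (f t)" "\<And>t. B < \<bar>t\<bar> \<Longrightarrow> f t = 0"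
    and g: "g \<in> L2" "\<And>t. g (- t) = cnj (g t)" "\<And>t. B < \<bar>t\<bar> \<Longrightarrow> g t = 0"
  shows "((AE t in lborel. f t = g t) \<or> (AE t in lborel. f t = - g t))
     \<longleftrightarrow> (\<forall>x \<omega>. norm (STFT \<phi> f x \<omega>) = norm (STFT \<phi> g x \<omega>))"
proof
  have [measurable]: "f \<in> borel_measurable borel" "g \<in> borel_measurable borel"
    "\<phi> \<in> borel_measurable borel"
    using \<phi> f(1) g(1) by (simp_all add: L2_borel_measurable)
  assume "(AE t in lborel. f t = g t) \<or> (AE t in lborel. f t = - g t)"
  then have "STFT \<phi> f x \<omega> = STFT \<phi> g x \<omega> \<or> STFT \<phi> f x \<omega> = STFT \<phi> (\<lambda>t. - g t) x \<omega>" for x \<omega>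
    by (auto intro: STFT_cong_AE)
  then show "\<forall>x \<omega>. norm (STFT \<phi> f x \<omega>) = norm (STFT \<phi> g x \<omega>)"
    by (metis STFT_uminus norm_minus_cancel)
next
  assume "\<forall>x \<omega>. norm (STFT \<phi> f x \<omega>) = norm (STFT \<phi> g x \<omega>)"
  then have "AE y in lborel. autocorr f y = autocorr g y"
    using autocorr_AE_eq_if_STFT_norm_eq[OF \<phi> amb f(1,3) g(1,3)] by simp
  then show "(AE t in lborel. f t = g t) \<or> (AE t in lborel. f t = - g t)"
    using f g by (intro AE_eq_or_neg_if_autocorr_AE_eq integrable_if_L2_bounded_support)
qed

theorem mainTheorem5:
  fixes B :: real and \<phi> f g :: "real \<Rightarrow> complex"
  assumes "B > 0"
    and "\<phi> \<in> L2"
    and "AE x in lborel. x \<in> {-2*B<..<2*B} \<longrightarrow> ambiguity \<phi> x 0 \<noteq> 0"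
    and "f \<in> L2" and "g \<in> L2"
    and "AE t in lborel. f (- t) = f t"
    and "AE t in lborel. g (- t) = g t"
    and "AE t in lborel. f t \<in> \<real>"
    and "AE t in lborel. g t \<in> \<real>"
    and "AE t in lborel. t \<notin> {-B..B} \<longrightarrow> f t = 0"
    and "AE t in lborel. t \<notin> {-B..B} \<longrightarrow> g t = 0"
  shows "((AE t in lborel. f t = g t) \<or> (AE t in lborel. f t = - g t))
     \<longleftrightarrow> (\<forall>x \<omega>. norm (STFT \<phi> f x \<omega>) = norm (STFT \<phi> g x \<omega>))"
proof -
  obtain f' where f': "f' \<in> L2" "\<And>t. f' (- t) = cnj (f' t)" "\<And>t. B < \<bar>t\<bar> \<Longrightarrow> f' t = 0"
    "AE t in lborel. f t = f' t"
    using conj_symmetric_representative[OF assms(4,6,8,10)] by blast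
  obtain g' where g': "g' \<in> L2" "\<And>t. g' (- t) = cnj (g' t)" "\<And>t. B < \<bar>t\<bar> \<Longrightarrow> g' t = 0"
    "AE t in lborel. g t = g' t"
    using conj_symmetric_representative[OF assms(5,7,9,11)] by blast
  have [measurable]: "f \<in> borel_measurable borel" "g \<in> borel_measurable borel"
    "\<phi> \<in> borel_measurable borel" "f' \<in> borel_measurable borel" "g' \<in> borel_measurable borel"
    using assms(2,4,5) f'(1) g'(1) by (simp_all add: L2_borel_measurable)
  have eq_iff: "AE t in lborel. (f t = g t) = (f' t = g' t)"
    using f'(4) g'(4) by eventually_elim simp
  have eq_neg_iff: "AE t in lborel. (f t = - g t) = (f' t = - g' t)"
    using f'(4) g'(4) by eventually_elim simp
  have "STFT \<phi> f x \<omega> = STFT \<phi> f' x \<omega>" "STFT \<phi> g x \<omega> = STFT \<phi> g' x \<omega>" for x \<omega>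
    using f'(4) g'(4) by (auto intro: STFT_cong_AE)
  then show ?thesis
    unfolding eventually_subst[OF eq_iff] eventually_subst[OF eq_neg_iff]
    using STFT_norm_eq_iff_AE_eq_or_neg[OF assms(2,3) f'(1-3) g'(1-3)] by simp
qed

end
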